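(* The sequence $\{E_n(x)\}_{n\ge 0}$ of Carlitz $\mathbf{F}_q$-linear polynomials is an orthonormal basis of $LC(O,K)$ if and only if the sequence $\{\mathcal{D}_n\}_{n\ge 0}$ of hyper-differential operators is an orthonormal basis of $LC(O,K)$.
   Context: Let $q$ be a prime power, $\mathbf{F}_q$ the field with $q$ elements, $K=\mathbf{F}_q((T))$, $O=\mathbf{F}_q[[T]]$. For nonzero $x=\sum_i\alpha_iT^i\in K$ let $v(x)$ be the least $i$ with $\alpha_i\neq 0$ and $|x|=q^{-v(x)}$, $|0|=0$. $C(O,K)$ is the $K$-Banach space of continuous functions $O\to K$ with the sup-norm $\|f\|=\max_{t\in O}|f(t)|$, and $LC(O,K)$ is its subspace of continuous $\mathbf{F}_q$-linear functions. A sequence $(f_n)_{n\ge0}$ in such a Banach space $E$ is an orthonormal basis of $E$ if every $f\in E$ can be written uniquely as $f=\sum_{n\ge0}a_nf_n$ with $a_n\in K$, $a_n\to0$, and then $\|f\|=\max_n|a_n|$. For $n\ge1$ put $[n]=T^{q^n}-T$, $F_0=1$, $F_n=[n][n-1]^q\cdots[1]^{q^{n-1}}$, and $e_n(x)=\prod_{m\in\mathbf{F}_q[T],\ \deg m<n}(x-m)$ (product over all polynomials of degree $<n$, including $0$). Set $E_0(x)=x$ and $E_n(x)=e_n(x)/F_n$ for $n\ge1$ (Carlitz $\mathbf{F}_q$-linear polynomials). The hyper-differential operators (Hasse derivatives) $\mathcal{D}_n$, $n\ge0$, are defined by $\mathcal{D}_n(\sum_i a_iT^i)=\sum_i\binom{i}{n}a_iT^{i-n}$,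 with binomial coefficients read in $\mathbf{F}_q$; they are continuous $\mathbf{F}_q$-linear maps $O\to O$. *)

theory Defs
  imports "HOL-Analysis.Analysis" "HOL-Computational_Algebra.Computational_Algebra"
begin

text \<open>K = F_q((T)) is modelled by the type 'a fls of formal Laurent series over a finite
field 'a (so q = CARD('a) is automatically a prime power).\<close>

definition lnorm :: "'a::{field,finite} fls \<Rightarrow> real" where
  "lnorm x = (if x = 0 then 0 else real CARD('a) powr (- real_of_int (fls_subdegree x)))"

text \<open>The valuation ring O = F_q[[T]].\<close>
definition Oset :: "'a::{field,finite} fls set" where
  "Oset = {x. x = 0 \<or> 0 \<le> fls_subdegree x}"

definition supnorm :: "('a::{field,finite} fls \<Rightarrow> 'a fls) \<Rightarrow> real" where
  "supnorm f = (SUP t\<in>Oset. lnorm (f t))"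

definition cont_on_O :: "('a::{field,finite} fls \<Rightarrow> 'a fls) \<Rightarrow> bool" where
  "cont_on_O f \<longleftrightarrow> (\<forall>t\<in>Oset. \<forall>e>0. \<exists>d>0. \<forall>s\<in>Oset.
       lnorm (s - t) < d \<longrightarrow> lnorm (f s - f t) < e)"

definition CO :: "('a::{field,finite} fls \<Rightarrow> 'a fls) set" where
  "CO = {f. cont_on_O f}"

definition Fq_linear_on_O :: "('a::{field,finite} fls \<Rightarrow> 'a fls) \<Rightarrow> bool" where
  "Fq_linear_on_O f \<longleftrightarrow> (\<forall>s\<in>Oset. \<forall>t\<in>Oset. f (s + t) = f s + f t) \<and>
     (\<forall>(c::'a) s. s \<in> Oset \<longrightarrow> f (fls_const c * s) = fls_const c * f s)"

definition LC :: "('a::{field,finite} fls \<Rightarrow> 'a fls) set" where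
  "LC = {f. cont_on_O f \<and> Fq_linear_on_O f}"

text \<open>Orthonormal basis of a subspace E of C(O,K) (functions are compared on O only).\<close>
definition represents ::
  "(nat \<Rightarrow> 'a::{field,finite} fls) \<Rightarrow> (nat \<Rightarrow> 'a fls \<Rightarrow> 'a fls) \<Rightarrow> ('a fls \<Rightarrow> 'a fls) \<Rightarrow> bool" where
  "represents a fs f \<longleftrightarrow>
     (\<lambda>N. supnorm (\<lambda>t. f t - (\<Sum>n<N. a n * fs n t))) \<longlonglongrightarrow> 0"

definition null_seq :: "(nat \<Rightarrow> 'a::{field,finite} fls) \<Rightarrow> bool" where
  "null_seq a \<longleftrightarrow> (\<lambda>n. lnorm (a n)) \<longlonglongrightarrow> 0"

definition orthonormal_basis ::
  "('a::{field,finite} fls \<Rightarrow> 'a fls) set \<Rightarrow> (nat \<Rightarrow> 'a fls \<Rightarrow> 'a fls) \<Rightarrow> bool" where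
  "orthonormal_basis E fs \<longleftrightarrow> (\<forall>n. fs n \<in> E) \<and>
     (\<forall>f\<in>E. (\<exists>!a. null_seq a \<and> represents a fs f) \<and>
            (\<forall>a. null_seq a \<and> represents a fs f \<longrightarrow> supnorm f = (SUP n. lnorm (a n))))"

definition poly_to_fls :: "'a::{field,finite} poly \<Rightarrow> 'a fls" where
  "poly_to_fls p = fps_to_fls (fps_of_poly p)"

definition brk :: "nat \<Rightarrow> 'a::{field,finite} fls" where
  "brk n = fls_X ^ (CARD('a) ^ n) - fls_X"

definition carF :: "nat \<Rightarrow> 'a::{field,finite} fls" where
  "carF n = (\<Prod>i\<in>{1..n}. brk i ^ (CARD('a) ^ (n - i)))"

definition car_e :: "nat \<Rightarrow> 'a::{field,finite} fls \<Rightarrow> 'a fls" where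
  "car_e n x = (\<Prod>m\<in>{m::'a poly. degree m < n}. x - poly_to_fls m)"

definition carlitzE :: "nat \<Rightarrow> 'a::{field,finite} fls \<Rightarrow> 'a fls" where
  "carlitzE n x = (if n = 0 then x else car_e n x / carF n)"

definition hasse :: "nat \<Rightarrow> 'a::{field,finite} fls \<Rightarrow> 'a fls" where
  "hasse n x = Abs_fls (\<lambda>k. if k + int n < 0 then 0
       else of_nat (nat (k + int n) choose n) * fls_nth x (k + int n))"

end

theory Submission
  imports Defs
begin

(* Both sides of the equivalence hold, for the same reason. A continuous F_q-linear f on O is
   determined by the values f(T^i), which tend to 0, and its sup-norm is sup_i |f(T^i)|: truncate
   the T-adic expansion of the argument and use continuity. Both the D_n and the E_n form a
   triangular family: h_n(T^i) = 0 for i < n, |h_n(T^n)| = 1 and |h_n(T^i)| <= q^(n-i).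
   For such a family the coefficients of f are obtained by back substitution from
   f(T^i) = sum_{n<=i} a_n h_n(T^i); the decay forces them to tend to 0, and the ultrametric
   inequality makes the expansion isometric. For D_n the three conditions are read off from
   D_n(T^i) = binom(i,n) T^(i-n). For E_n they come from the F_q-linearity of e_n and the
   recursion e_(n+1)(x) = e_n(x)^q - e_n(T^n)^(q-1) e_n(x), which gives
   v(e_n(T^i)) = v(F_n) + i - n. *)

section \<open>The absolute value on K\<close>

lemma CARD_field_ge_2: "CARD('a::{field,finite}) \<ge> 2"
proof -
  have "card {0::'a, 1} \<le> CARD('a)" by (rule card_mono) auto
  thus ?thesis by simp
qed

lemma real_CARD_field_gt_1: "real CARD('a::{field,finite}) > 1"
  using CARD_field_ge_2[where 'a='a] by linarith

lemma CARD_inverse_power_tendsto_0: "(\<lambda>n. 1 / real CARD('a::{field,finite}) ^ n) \<longlonglongrightarrow> 0"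
  using LIMSEQ_inverse_realpow_zero[OF real_CARD_field_gt_1] by (simp add: divide_inverse)

lemma CARD_inverse_power_antimono:
  "k \<le> m \<Longrightarrow> 1 / real CARD('a::{field,finite}) ^ m \<le> 1 / real CARD('a) ^ k"
  using real_CARD_field_gt_1[where 'a='a]
  by (intro divide_left_mono power_increasing) auto

lemma CARD_inverse_power_le_1: "1 / real CARD('a::{field,finite}) ^ k \<le> 1"
  using CARD_inverse_power_antimono[where 'a='a, of 0 k] by simp

lemma lnorm_nonneg [simp]: "lnorm x \<ge> 0"
  by (simp add: lnorm_def)

lemma lnorm_0 [simp]: "lnorm 0 = 0"
  by (simp add: lnorm_def)

lemma lnorm_1 [simp]: "lnorm (1::'a::{field,finite} fls) = 1"
  by (simp add: lnorm_def)

lemma lnorm_eq_0_iff [simp]: "lnorm (x::'a::{field,finite} fls) = 0 \<longleftrightarrow> x = 0"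
  using real_CARD_field_gt_1[where 'a='a] by (simp add: lnorm_def)

lemma lnorm_pos: "(x::'a::{field,finite} fls) \<noteq> 0 \<Longrightarrow> lnorm x > 0"
  using lnorm_nonneg[of x] lnorm_eq_0_iff[of x] by linarith

lemma lnorm_mult: "lnorm ((x::'a::{field,finite} fls) * y) = lnorm x * lnorm y"
  using real_CARD_field_gt_1[where 'a='a]
  by (cases "x = 0 \<or> y = 0") (auto simp: lnorm_def powr_add[symmetric] algebra_simps)

lemma lnorm_divide: "lnorm ((x::'a::{field,finite} fls) / y) = lnorm x / lnorm y"
proof (cases "y = 0")
  case False
  have "lnorm (x / y) * lnorm y = lnorm x"
    using False by (simp flip: lnorm_mult)
  thus ?thesis using lnorm_pos[OF False] by (simp add: eq_divide_eq)
qed simp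

lemma lnorm_uminus [simp]: "lnorm (- (x::'a::{field,finite} fls)) = lnorm x"
  by (simp add: lnorm_def)

lemma lnorm_minus_commute: "lnorm ((x::'a::{field,finite} fls) - y) = lnorm (y - x)"
  by (metis lnorm_uminus minus_diff_eq)

lemma lnorm_const: "lnorm (fls_const (c::'a::{field,finite})) = (if c = 0 then 0 else 1)"
  by (simp add: lnorm_def)

lemma lnorm_X_power: "lnorm (fls_X ^ i :: 'a::{field,finite} fls) = 1 / real CARD('a) ^ i"
  using real_CARD_field_gt_1[where 'a='a]
  by (simp add: lnorm_def powr_minus powr_realpow divide_inverse)

lemma lnorm_le_powr_iff:
  "lnorm (x::'a::{field,finite} fls) \<le> real CARD('a) powr (- real_of_int k) \<longleftrightarrow> x = 0 \<or> k \<le> fls_subdegree x"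
  using real_CARD_field_gt_1[where 'a='a] by (auto simp: lnorm_def)

lemma lnorm_add_le_max: "lnorm ((x::'a::{field,finite} fls) + y) \<le> max (lnorm x) (lnorm y)"
proof (cases "x = 0 \<or> y = 0 \<or> x + y = 0")
  case False
  hence "fls_subdegree x \<le> fls_subdegree (x + y) \<or> fls_subdegree y \<le> fls_subdegree (x + y)"
    using fls_plus_subdegree[of x y] by linarith
  thus ?thesis using False real_CARD_field_gt_1[where 'a='a]
    by (auto simp: lnorm_def intro: max.coboundedI1 max.coboundedI2)
qed (auto simp: le_max_iff_disj)

lemma lnorm_diff_le_max: "lnorm ((x::'a::{field,finite} fls) - y) \<le> max (lnorm x) (lnorm y)"
  using lnorm_add_le_max[of x "- y"] by simp

lemma lnorm_add_leI: "lnorm (x::'a::{field,finite} fls) \<le> B \<Longrightarrow> lnorm y \<le> B \<Longrightarrow> lnorm (x + y) \<le> B"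
  using lnorm_add_le_max[of x y] by linarith

lemma lnorm_diff_leI: "lnorm (x::'a::{field,finite} fls) \<le> B \<Longrightarrow> lnorm y \<le> B \<Longrightarrow> lnorm (x - y) \<le> B"
  using lnorm_add_leI[of x B "- y"] by simp

lemma lnorm_sum_leI:
  assumes "\<And>i. i \<in> A \<Longrightarrow> lnorm (f i :: 'a::{field,finite} fls) \<le> B" "0 \<le> B"
  shows "lnorm (sum f A) \<le> B"
  using assms
proof (induction A rule: infinite_finite_induct)
  case (insert x F)
  thus ?case by (auto intro!: lnorm_add_leI)
qed auto

lemma lnorm_prod: "lnorm (prod (f :: _ \<Rightarrow> 'a::{field,finite} fls) A) = (\<Prod>i\<in>A. lnorm (f i))"
  by (induction A rule: infinite_finite_induct) (simp_all add: lnorm_mult)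

lemma Oset_iff_lnorm_le_1: "(x::'a::{field,finite} fls) \<in> Oset \<longleftrightarrow> lnorm x \<le> 1"
  using lnorm_le_powr_iff[of x 0] by (simp add: Oset_def)

lemma Oset_add: "x \<in> Oset \<Longrightarrow> y \<in> Oset \<Longrightarrow> (x::'a::{field,finite} fls) + y \<in> Oset"
  by (simp add: Oset_iff_lnorm_le_1 lnorm_add_leI)

lemma Oset_diff: "x \<in> Oset \<Longrightarrow> y \<in> Oset \<Longrightarrow> (x::'a::{field,finite} fls) - y \<in> Oset"
  by (simp add: Oset_iff_lnorm_le_1 lnorm_diff_leI)

lemma Oset_mult: "x \<in> Oset \<Longrightarrow> y \<in> Oset \<Longrightarrow> (x::'a::{field,finite} fls) * y \<in> Oset"
  by (simp add: Oset_iff_lnorm_le_1 lnorm_mult mult_le_one)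

lemma Oset_0 [simp]: "0 \<in> Oset"
  by (simp add: Oset_def)

lemma Oset_const [simp]: "fls_const c \<in> Oset"
  by (simp add: Oset_def)

lemma Oset_X_power [simp]: "(fls_X ^ i :: 'a::{field,finite} fls) \<in> Oset"
  by (simp add: Oset_def)

lemma Oset_sum: "(\<And>i. i \<in> A \<Longrightarrow> f i \<in> Oset) \<Longrightarrow> sum (f :: _ \<Rightarrow> 'a::{field,finite} fls) A \<in> Oset"
  by (induction A rule: infinite_finite_induct) (auto intro: Oset_add)

section \<open>Continuous F_q-linear functions on O\<close>

lemma LC_add: "f \<in> LC \<Longrightarrow> s \<in> Oset \<Longrightarrow> t \<in> Oset \<Longrightarrow> f (s + t) = f s + f t"
  by (simp add: LC_def Fq_linear_on_O_def)

lemma LC_const_mult: "f \<in> LC \<Longrightarrow> s \<in> Oset \<Longrightarrow> f (fls_const c * s) = fls_const c * f s"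
  by (simp add: LC_def Fq_linear_on_O_def)

lemma LC_0: "(f :: 'a::{field,finite} fls \<Rightarrow> 'a fls) \<in> LC \<Longrightarrow> f 0 = 0"
  using LC_add[of f 0 0] by (metis Oset_0 add_0 add_cancel_left_right)

definition series_prefix :: "nat \<Rightarrow> 'a::{field,finite} fls \<Rightarrow> 'a fls" where
  "series_prefix M t = (\<Sum>i<M. fls_const (fls_nth t (int i)) * fls_X ^ i)"

lemma series_prefix_in_Oset: "series_prefix M t \<in> Oset"
  unfolding series_prefix_def by (intro Oset_sum Oset_mult) auto

lemma LC_series_prefix:
  "f \<in> LC \<Longrightarrow> f (series_prefix M t) = (\<Sum>i<M. fls_const (fls_nth t (int i)) * f (fls_X ^ i))"
proof (induction M)
  case (Suc M)
  have "series_prefix (Suc M) t = series_prefix M t + fls_const (fls_nth t (int M)) * fls_X ^ M"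
    by (simp add: series_prefix_def)
  thus ?case
    using Suc by (simp add: LC_add LC_const_mult series_prefix_in_Oset Oset_mult)
qed (simp add: series_prefix_def LC_0)

lemma lnorm_diff_series_prefix:
  assumes "(t::'a::{field,finite} fls) \<in> Oset"
  shows "lnorm (t - series_prefix M t) \<le> 1 / real CARD('a) ^ M"
proof -
  have "fls_nth (t - series_prefix M t) k = 0" if "k < int M" for k
  proof (cases "k < 0")
    case True
    hence "fls_nth t k = 0"
      using assms fls_eq0_below_subdegree[of k t] by (fastforce simp: Oset_def)
    thus ?thesis using True by (simp add: series_prefix_def fls_nth_sum)
  next
    case False
    define j where "j = nat k"
    have j: "k = int j" "j < M" using False that by (auto simp: j_def)
    have "fls_nth (series_prefix M t) k = (\<Sum>i<M. if i = j then fls_nth t k else 0)"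
      unfolding series_prefix_def fls_nth_sum j by (intro sum.cong) auto
    thus ?thesis using j by simp
  qed
  hence "t - series_prefix M t = 0 \<or> int M \<le> fls_subdegree (t - series_prefix M t)"
    using fls_subdegree_geI by blast
  hence "lnorm (t - series_prefix M t) \<le> real CARD('a) powr (- real_of_int (int M))"
    using lnorm_le_powr_iff by blast
  thus ?thesis
    using real_CARD_field_gt_1[where 'a='a] by (simp add: powr_minus powr_realpow divide_inverse)
qed

lemma lnorm_LC_le_if_monomials_le:
  assumes f: "(f :: 'a::{field,finite} fls \<Rightarrow> 'a fls) \<in> LC" and t: "t \<in> Oset"
    and S: "\<And>i. lnorm (f (fls_X ^ i)) \<le> S" "0 \<le> S"
  shows "lnorm (f t) \<le> S"
proof (rule ccontr)
  assume "\<not> lnorm (f t) \<le> S"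
  hence gt: "lnorm (f t) > S" by simp
  moreover have "lnorm (f t) > 0" using gt S(2) by linarith
  ultimately obtain d where d: "d > 0" "\<And>s. s \<in> Oset \<Longrightarrow> lnorm (s - t) < d \<Longrightarrow> lnorm (f s - f t) < lnorm (f t)"
    using f t unfolding LC_def cont_on_O_def by blast
  obtain M where M: "1 / real CARD('a) ^ M < d"
    using order_tendstoD(2)[OF CARD_inverse_power_tendsto_0 d(1)] eventually_sequentially by auto
  have "lnorm (series_prefix M t - t) < d"
    using lnorm_diff_series_prefix[OF t, of M] M by (simp add: lnorm_minus_commute)
  hence close: "lnorm (f (series_prefix M t) - f t) < lnorm (f t)"
    using d(2) series_prefix_in_Oset by blast
  have small: "lnorm (f (series_prefix M t)) \<le> S"
    unfolding LC_series_prefix[OF f] using S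
    by (intro lnorm_sum_leI) (auto simp: lnorm_mult lnorm_const)
  have "lnorm (f t) \<le> max (lnorm (f (series_prefix M t))) (lnorm (f (series_prefix M t) - f t))"
    using lnorm_diff_le_max[of "f (series_prefix M t)" "f (series_prefix M t) - f t"] by simp
  thus False using close small gt by linarith
qed

lemma LC_monomials_tendsto_0:
  assumes f: "(f :: 'a::{field,finite} fls \<Rightarrow> 'a fls) \<in> LC"
  shows "(\<lambda>i. lnorm (f (fls_X ^ i))) \<longlonglongrightarrow> 0"
proof (rule LIMSEQ_I)
  fix r :: real assume "r > 0"
  have "cont_on_O f" using f by (simp add: LC_def)
  then obtain d where d: "d > 0" "\<forall>s\<in>Oset. lnorm (s - 0) < d \<longrightarrow> lnorm (f s - f 0) < r"
    using \<open>r > 0\<close> unfolding cont_on_O_def by (meson Oset_0)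
  obtain M where M: "\<forall>i\<ge>M. 1 / real CARD('a) ^ i < d"
    using order_tendstoD(2)[OF CARD_inverse_power_tendsto_0 d(1)] eventually_sequentially by auto
  have "lnorm (f (fls_X ^ i)) < r" if "i \<ge> M" for i
    using d(2)[rule_format, OF Oset_X_power, of i] M that by (simp add: lnorm_X_power LC_0[OF f])
  thus "\<exists>M. \<forall>i\<ge>M. norm (lnorm (f (fls_X ^ i)) - 0) < r" by auto
qed

lemma bdd_above_LC_monomials:
  "(f :: 'a::{field,finite} fls \<Rightarrow> 'a fls) \<in> LC \<Longrightarrow> bdd_above (range (\<lambda>i. lnorm (f (fls_X ^ i))))"
  using LC_monomials_tendsto_0 by (intro Bseq_bdd_above convergent_imp_Bseq convergentI)

lemma supnorm_LC:
  assumes f: "(f :: 'a::{field,finite} fls \<Rightarrow> 'a fls) \<in> LC"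
  shows "supnorm f = (SUP i. lnorm (f (fls_X ^ i)))"
proof -
  let ?S = "SUP i. lnorm (f (fls_X ^ i))"
  have le: "lnorm (f (fls_X ^ i)) \<le> ?S" for i
    by (rule cSUP_upper[OF _ bdd_above_LC_monomials[OF f]]) auto
  have "0 \<le> ?S" using le[of 0] lnorm_nonneg order_trans by blast
  hence bound: "lnorm (f t) \<le> ?S" if "t \<in> Oset" for t
    using lnorm_LC_le_if_monomials_le[OF f that le] by blast
  have "Oset \<noteq> {}" using Oset_0 by blast
  show ?thesis unfolding supnorm_def
  proof (rule antisym)
    show "(SUP t\<in>Oset. lnorm (f t)) \<le> ?S" by (rule cSUP_least) (use bound \<open>Oset \<noteq> {}\<close> in auto)
    have "bdd_above ((\<lambda>t. lnorm (f t)) ` Oset)" using bound by (intro bdd_aboveI2)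
    thus "?S \<le> (SUP t\<in>Oset. lnorm (f t))" by (intro cSUP_least) (auto intro!: cSUP_upper)
  qed
qed

lemma supnorm_LC_le:
  assumes "g \<in> LC" "\<And>i. lnorm (g (fls_X ^ i :: 'a::{field,finite} fls)) \<le> C"
  shows "supnorm g \<le> C"
  unfolding supnorm_LC[OF assms(1)] by (rule cSUP_least) (use assms(2) in auto)

lemma lnorm_monomial_le_supnorm_LC:
  assumes "g \<in> LC"
  shows "lnorm (g (fls_X ^ i :: 'a::{field,finite} fls)) \<le> supnorm g"
  unfolding supnorm_LC[OF assms] by (rule cSUP_upper[OF _ bdd_above_LC_monomials[OF assms]]) auto

lemma cont_on_O_diff:
  assumes f: "cont_on_O f" and g: "cont_on_O g"
  shows "cont_on_O (\<lambda>t. f t - g t)"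
  unfolding cont_on_O_def
proof (intro ballI allI impI)
  fix t :: "'a fls" and e :: real assume t: "t \<in> Oset" and e: "e > 0"
  obtain d1 where d1: "d1 > 0" "\<forall>s\<in>Oset. lnorm (s - t) < d1 \<longrightarrow> lnorm (f s - f t) < e"
    using f t e unfolding cont_on_O_def by blast
  obtain d2 where d2: "d2 > 0" "\<forall>s\<in>Oset. lnorm (s - t) < d2 \<longrightarrow> lnorm (g s - g t) < e"
    using g t e unfolding cont_on_O_def by blast
  have "lnorm (f s - g s - (f t - g t)) < e" if "s \<in> Oset" "lnorm (s - t) < min d1 d2" for s
  proof -
    have "lnorm (f s - f t) < e" "lnorm (g s - g t) < e" using d1 d2 that by auto
    hence "lnorm ((f s - f t) - (g s - g t)) < e"
      using lnorm_diff_le_max[of "f s - f t" "g s - g t"] by linarith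
    moreover have "(f s - f t) - (g s - g t) = f s - g s - (f t - g t)" by simp
    ultimately show ?thesis by (simp only:)
  qed
  thus "\<exists>d>0. \<forall>s\<in>Oset. lnorm (s - t) < d \<longrightarrow> lnorm (f s - g s - (f t - g t)) < e"
    using d1 d2 by (intro exI[of _ "min d1 d2"]) auto
qed

lemma cont_on_O_mult_left:
  assumes g: "cont_on_O g"
  shows "cont_on_O (\<lambda>t. c * g t)"
  unfolding cont_on_O_def
proof (intro ballI allI impI)
  fix t :: "'a fls" and e :: real assume t: "t \<in> Oset" and e: "e > 0"
  have "e / (lnorm c + 1) > 0" using e by (simp add: add_nonneg_pos)
  then obtain d where d: "d > 0" "\<forall>s\<in>Oset. lnorm (s - t) < d \<longrightarrow> lnorm (g s - g t) < e / (lnorm c + 1)"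
    using g t unfolding cont_on_O_def by blast
  have "lnorm (c * g s - c * g t) < e" if "s \<in> Oset" "lnorm (s - t) < d" for s
  proof -
    have "lnorm (c * g s - c * g t) = lnorm c * lnorm (g s - g t)"
      by (simp add: lnorm_mult[symmetric] algebra_simps)
    also have "\<dots> \<le> lnorm c * (e / (lnorm c + 1))"
      using d that by (intro mult_left_mono) auto
    also have "\<dots> < (lnorm c + 1) * (e / (lnorm c + 1))"
      using \<open>e / (lnorm c + 1) > 0\<close> by (intro mult_strict_right_mono) auto
    also have "\<dots> = e" by (simp add: add_nonneg_pos less_imp_neq[symmetric])
    finally show ?thesis .
  qed
  thus "\<exists>d>0. \<forall>s\<in>Oset. lnorm (s - t) < d \<longrightarrow> lnorm (c * g s - c * g t) < e"
    using d by blast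
qed

lemma LC_diff:
  assumes "f \<in> LC" "g \<in> LC"
  shows "(\<lambda>t. f t - g t) \<in> LC"
  using assms cont_on_O_diff[of f g]
  by (simp add: LC_def Fq_linear_on_O_def algebra_simps)

lemma LC_mult_left:
  assumes "g \<in> LC"
  shows "(\<lambda>t. c * g t) \<in> LC"
  using assms cont_on_O_mult_left[of g c]
  by (simp add: LC_def Fq_linear_on_O_def algebra_simps)

lemma LC_sum:
  assumes "\<And>n. n \<in> A \<Longrightarrow> g n \<in> LC"
  shows "(\<lambda>t. \<Sum>n\<in>A. g n t :: 'a::{field,finite} fls) \<in> LC"
  using assms
proof (induction A rule: infinite_finite_induct)
  case (insert x F)
  have "(\<lambda>t. g x t - (-1) * (\<Sum>n\<in>F. g n t)) \<in> LC"
    using insert by (intro LC_diff LC_mult_left) auto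
  thus ?case using insert by simp
qed (simp_all add: LC_def cont_on_O_def Fq_linear_on_O_def)

definition Fq_linear :: "('a::{field,finite} fls \<Rightarrow> 'a fls) \<Rightarrow> bool" where
  "Fq_linear g \<longleftrightarrow> (\<forall>x y. g (x + y) = g x + g y) \<and> (\<forall>c x. g (fls_const c * x) = fls_const c * g x)"

lemma Fq_linear_diff: "Fq_linear g \<Longrightarrow> g (x - y) = g x - g y"
  unfolding Fq_linear_def by (metis add_diff_cancel diff_add_cancel)

lemma LC_if_Fq_linear_Lipschitz:
  assumes lin: "Fq_linear g" and C: "0 < C" and Lip: "\<And>x. x \<in> Oset \<Longrightarrow> lnorm (g x) \<le> C * lnorm x"
  shows "g \<in> LC"
proof -
  have "lnorm (g s - g t) < e" if "s \<in> Oset" "t \<in> Oset" "lnorm (s - t) < e / C" for s t e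
  proof -
    have "lnorm (g s - g t) \<le> C * lnorm (s - t)"
      using Lip[OF Oset_diff[OF that(1,2)]] Fq_linear_diff[OF lin] by simp
    also have "\<dots> < e" using that(3) C by (simp add: field_simps)
    finally show ?thesis .
  qed
  hence "cont_on_O g"
    unfolding cont_on_O_def using C by (metis divide_pos_pos)
  thus ?thesis using lin by (simp add: LC_def Fq_linear_on_O_def Fq_linear_def)
qed

section \<open>Triangular families are orthonormal bases\<close>

locale triangular_LC_family =
  fixes h :: "nat \<Rightarrow> 'a::{field,finite} fls \<Rightarrow> 'a fls"
  assumes in_LC: "h n \<in> LC"
    and vanishes_below: "i < n \<Longrightarrow> h n (fls_X ^ i) = 0"
    and lnorm_diagonal: "lnorm (h n (fls_X ^ n)) = 1"
    and lnorm_decay: "lnorm (h n (fls_X ^ i)) \<le> 1 / real CARD('a) ^ (i - n)"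
begin

lemma lnorm_entry_le_1: "lnorm (h n (fls_X ^ i)) \<le> 1"
  using lnorm_decay CARD_inverse_power_le_1 order_trans by blast

lemma remainder_in_LC: "f \<in> LC \<Longrightarrow> (\<lambda>t. f t - (\<Sum>n<N. a n * h n t)) \<in> LC"
  by (intro LC_diff LC_sum LC_mult_left in_LC)

lemma sum_lessThan_eq_atMost:
  "i < N \<Longrightarrow> (\<Sum>n<N. a n * h n (fls_X ^ i)) = (\<Sum>n\<le>i. a n * h n (fls_X ^ i))"
  by (rule sum.mono_neutral_right) (auto simp: vanishes_below)

definition expansion_eqs :: "('a fls \<Rightarrow> 'a fls) \<Rightarrow> (nat \<Rightarrow> 'a fls) \<Rightarrow> bool" where
  "expansion_eqs f a \<longleftrightarrow> (\<forall>i. f (fls_X ^ i) = (\<Sum>n\<le>i. a n * h n (fls_X ^ i)))"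

lemma represents_imp_expansion_eqs:
  assumes f: "f \<in> LC" and a: "represents a h f"
  shows "expansion_eqs f a"
  unfolding expansion_eqs_def
proof
  fix i
  let ?c = "f (fls_X ^ i) - (\<Sum>n\<le>i. a n * h n (fls_X ^ i))"
  have "lnorm ?c \<le> 0"
  proof (rule LIMSEQ_le_const)
    show "(\<lambda>N. supnorm (\<lambda>t. f t - (\<Sum>n<N. a n * h n t))) \<longlonglongrightarrow> 0"
      using a by (simp add: represents_def)
    have "lnorm ?c \<le> supnorm (\<lambda>t. f t - (\<Sum>n<N. a n * h n t))" if "i < N" for N
      using lnorm_monomial_le_supnorm_LC[OF remainder_in_LC[OF f, of a N], of i]
      by (simp add: sum_lessThan_eq_atMost[OF that])
    thus "\<exists>N0. \<forall>N\<ge>N0. lnorm ?c \<le> supnorm (\<lambda>t. f t - (\<Sum>n<N. a n * h n t))"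
      by (intro exI[of _ "Suc i"]) auto
  qed
  thus "f (fls_X ^ i) = (\<Sum>n\<le>i. a n * h n (fls_X ^ i))"
    using lnorm_nonneg[of ?c] by simp
qed

lemma expansion_eqs_diagonal:
  "expansion_eqs f a \<Longrightarrow> a i * h i (fls_X ^ i) = f (fls_X ^ i) - (\<Sum>n<i. a n * h n (fls_X ^ i))"
  unfolding expansion_eqs_def by (simp add: lessThan_Suc_atMost[symmetric])

lemma lnorm_expansion_coeff:
  assumes "expansion_eqs f a"
  shows "lnorm (a i) = lnorm (f (fls_X ^ i) - (\<Sum>n<i. a n * h n (fls_X ^ i)))"
proof -
  have "lnorm (a i) = lnorm (a i * h i (fls_X ^ i))" by (simp add: lnorm_mult lnorm_diagonal)
  thus ?thesis by (simp only: expansion_eqs_diagonal[OF assms])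
qed

lemma expansion_eqs_unique:
  assumes "expansion_eqs f a" "expansion_eqs f a'"
  shows "a = a'"
proof
  fix i show "a i = a' i"
  proof (induction i rule: less_induct)
    case (less i)
    have "a i * h i (fls_X ^ i) = a' i * h i (fls_X ^ i)"
      using assms less by (simp add: expansion_eqs_diagonal)
    moreover have "h i (fls_X ^ i) \<noteq> 0" using lnorm_diagonal[of i] by auto
    ultimately show ?case by simp
  qed
qed

fun back_subst :: "('a fls \<Rightarrow> 'a fls) \<Rightarrow> nat \<Rightarrow> 'a fls" where
  "back_subst f i = (f (fls_X ^ i) - (\<Sum>n<i. back_subst f n * h n (fls_X ^ i))) / h i (fls_X ^ i)"

declare back_subst.simps [simp del]

lemma expansion_eqs_back_subst: "expansion_eqs f (back_subst f)"
  unfolding expansion_eqs_def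
proof
  fix i
  have "h i (fls_X ^ i) \<noteq> 0" using lnorm_diagonal[of i] by auto
  hence "back_subst f i * h i (fls_X ^ i) = f (fls_X ^ i) - (\<Sum>n<i. back_subst f n * h n (fls_X ^ i))"
    by (subst back_subst.simps) simp
  thus "f (fls_X ^ i) = (\<Sum>n\<le>i. back_subst f n * h n (fls_X ^ i))"
    by (simp add: lessThan_Suc_atMost[symmetric] algebra_simps)
qed

lemma lnorm_expansion_coeff_le:
  assumes "expansion_eqs f a" "0 \<le> C" "lnorm (f (fls_X ^ i)) \<le> C"
    and "\<And>n. n < i \<Longrightarrow> lnorm (a n) * lnorm (h n (fls_X ^ i)) \<le> C"
  shows "lnorm (a i) \<le> C"
  unfolding lnorm_expansion_coeff[OF assms(1)]
  using assms(2-4) by (intro lnorm_diff_leI lnorm_sum_leI) (auto simp: lnorm_mult)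

lemma lnorm_expansion_coeffs_le:
  assumes a: "expansion_eqs f a" and B: "0 \<le> B" "\<And>i. lnorm (f (fls_X ^ i)) \<le> B"
  shows "lnorm (a i) \<le> B"
proof (induction i rule: less_induct)
  case (less i)
  have "lnorm (a n) * lnorm (h n (fls_X ^ i)) \<le> B" if "n < i" for n
    using order_trans[OF mult_left_le[OF lnorm_entry_le_1 lnorm_nonneg] less[OF that]] .
  thus ?case using lnorm_expansion_coeff_le[OF a B(1) B(2)] by blast
qed

(* Past N the data are small, and the influence of the first N coefficients dies out
   geometrically by lnorm_decay. *)
lemma lnorm_expansion_coeffs_tail_le:
  assumes a: "expansion_eqs f a" and B: "\<And>n. lnorm (a n) \<le> B"
    and e: "0 \<le> e" "\<And>i. N \<le> i \<Longrightarrow> lnorm (f (fls_X ^ i)) \<le> e"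
  shows "N \<le> i \<Longrightarrow> lnorm (a i) \<le> max e (B / real CARD('a) ^ (i - N))"
proof (induction i rule: less_induct)
  case (less i)
  let ?q = "real CARD('a)"
  have q: "?q > 0" using real_CARD_field_gt_1[where 'a='a] by linarith
  have B0: "0 \<le> B" using B[of 0] lnorm_nonneg order_trans by blast
  have "lnorm (a n) * lnorm (h n (fls_X ^ i)) \<le> max e (B / ?q ^ (i - N))" if "n < i" for n
  proof (cases "n < N")
    case True
    have "lnorm (h n (fls_X ^ i)) \<le> 1 / ?q ^ (i - N)"
      using lnorm_decay[of n i] CARD_inverse_power_antimono[where 'a='a, of "i - N" "i - n"] True
      by (meson diff_le_mono2 less_imp_le_nat order_trans)
    hence "lnorm (a n) * lnorm (h n (fls_X ^ i)) \<le> B * (1 / ?q ^ (i - N))"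
      using B[of n] B0 by (intro mult_mono) auto
    thus ?thesis by simp
  next
    case False
    hence "lnorm (a n) \<le> e \<or> lnorm (a n) \<le> B / ?q ^ (n - N)"
      using less that by (simp add: le_max_iff_disj)
    thus ?thesis
    proof
      assume "lnorm (a n) \<le> e"
      thus ?thesis using mult_left_le[OF lnorm_entry_le_1[of n i] lnorm_nonneg[of "a n"]] by simp
    next
      assume "lnorm (a n) \<le> B / ?q ^ (n - N)"
      hence "lnorm (a n) * lnorm (h n (fls_X ^ i)) \<le> B / ?q ^ (n - N) * (1 / ?q ^ (i - n))"
        using lnorm_decay[of n i] B0 q by (intro mult_mono) auto
      also have "\<dots> = B / ?q ^ (i - N)"
        using False that by (simp add: power_add[symmetric])
      finally show ?thesis by simp
    qed
  qed
  moreover have "lnorm (f (fls_X ^ i)) \<le> max e (B / ?q ^ (i - N))" using e(2)[OF less.prems] by simp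
  moreover have "0 \<le> max e (B / ?q ^ (i - N))" using e(1) by simp
  ultimately show ?case by (intro lnorm_expansion_coeff_le[OF a])
qed

lemma expansion_coeffs_tendsto_0:
  assumes a: "expansion_eqs f a" and f: "(\<lambda>i. lnorm (f (fls_X ^ i))) \<longlonglongrightarrow> 0"
  shows "(\<lambda>i. lnorm (a i)) \<longlonglongrightarrow> 0"
proof (rule LIMSEQ_I)
  fix r :: real assume r: "r > 0"
  define B where "B = (SUP i. lnorm (f (fls_X ^ i)))"
  have "bdd_above (range (\<lambda>i. lnorm (f (fls_X ^ i))))"
    using f by (intro Bseq_bdd_above convergent_imp_Bseq convergentI)
  hence fB: "lnorm (f (fls_X ^ i)) \<le> B" for i unfolding B_def by (intro cSUP_upper) auto
  hence "0 \<le> B" using lnorm_nonneg order_trans by blast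
  hence aB: "lnorm (a n) \<le> B" for n using lnorm_expansion_coeffs_le[OF a _ fB] by blast
  obtain N where N: "\<And>i. N \<le> i \<Longrightarrow> lnorm (f (fls_X ^ i)) \<le> r / 2"
    using LIMSEQ_D[OF f, of "r / 2"] r by (auto intro: less_imp_le)
  have "\<forall>\<^sub>F k in sequentially. B * (1 / real CARD('a) ^ k) < r"
    by (rule order_tendstoD(2)[OF tendsto_mult_right_zero[OF CARD_inverse_power_tendsto_0] r])
  then obtain K where K: "\<And>k. K \<le> k \<Longrightarrow> B / real CARD('a) ^ k < r"
    by (auto simp: eventually_sequentially)
  have "lnorm (a i) < r" if "N + K \<le> i" for i
  proof -
    have "max (r / 2) (B / real CARD('a) ^ (i - N)) < r" using K[of "i - N"] r that by simp
    thus ?thesis using lnorm_expansion_coeffs_tail_le[OF a aB, of "r / 2" N i] N r that by simp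
  qed
  thus "\<exists>M. \<forall>i\<ge>M. norm (lnorm (a i) - 0) < r" by auto
qed

lemma expansion_eqs_imp_represents:
  assumes f: "f \<in> LC" and a: "expansion_eqs f a" and null: "(\<lambda>n. lnorm (a n)) \<longlonglongrightarrow> 0"
  shows "represents a h f"
  unfolding represents_def
proof (rule LIMSEQ_I)
  fix r :: real assume r: "r > 0"
  obtain N0 where N0: "\<And>n. N0 \<le> n \<Longrightarrow> lnorm (a n) < r / 2"
    using LIMSEQ_D[OF null, of "r / 2"] r by auto
  have "supnorm (\<lambda>t. f t - (\<Sum>n<N. a n * h n t)) < r" if N: "N0 \<le> N" for N
  proof -
    have "supnorm (\<lambda>t. f t - (\<Sum>n<N. a n * h n t)) \<le> r / 2"
    proof (rule supnorm_LC_le[OF remainder_in_LC[OF f]])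
      fix i
      show "lnorm (f (fls_X ^ i) - (\<Sum>n<N. a n * h n (fls_X ^ i))) \<le> r / 2"
      proof (cases "i < N")
        case True
        thus ?thesis using a r by (simp add: sum_lessThan_eq_atMost expansion_eqs_def)
      next
        case False
        have "(\<Sum>n\<le>i. a n * h n (fls_X ^ i))
            = (\<Sum>n<N. a n * h n (fls_X ^ i)) + (\<Sum>n\<in>{N..i}. a n * h n (fls_X ^ i))"
          using False by (subst sum.union_disjoint[symmetric]) (auto intro!: sum.cong)
        hence "f (fls_X ^ i) - (\<Sum>n<N. a n * h n (fls_X ^ i)) = (\<Sum>n\<in>{N..i}. a n * h n (fls_X ^ i))"
          using a by (simp add: expansion_eqs_def)
        moreover have "lnorm (a n * h n (fls_X ^ i)) \<le> r / 2" if "n \<in> {N..i}" for n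
          using mult_left_le[OF lnorm_entry_le_1[of n i] lnorm_nonneg[of "a n"]] N0[of n] N that
          by (simp add: lnorm_mult)
        hence "lnorm (\<Sum>n\<in>{N..i}. a n * h n (fls_X ^ i)) \<le> r / 2"
          using r by (intro lnorm_sum_leI) auto
        ultimately show ?thesis by simp
      qed
    qed
    thus ?thesis using r by linarith
  qed
  moreover have "0 \<le> supnorm (\<lambda>t. f t - (\<Sum>n<N. a n * h n t))" for N
    using lnorm_monomial_le_supnorm_LC[OF remainder_in_LC[OF f, of a N], of 0] lnorm_nonneg order_trans by blast
  ultimately show "\<exists>N0. \<forall>N\<ge>N0. norm (supnorm (\<lambda>t. f t - (\<Sum>n<N. a n * h n t)) - 0) < r"
    by auto
qed

lemma supnorm_eq_SUP_expansion_coeffs: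
  assumes f: "f \<in> LC" and a: "expansion_eqs f a" and null: "(\<lambda>n. lnorm (a n)) \<longlonglongrightarrow> 0"
  shows "supnorm f = (SUP n. lnorm (a n))"
proof (rule antisym)
  have bdd: "bdd_above (range (\<lambda>n. lnorm (a n)))"
    using null by (intro Bseq_bdd_above convergent_imp_Bseq convergentI)
  hence A: "lnorm (a n) \<le> (SUP n. lnorm (a n))" for n by (intro cSUP_upper) auto
  hence "0 \<le> (SUP n. lnorm (a n))" using lnorm_nonneg order_trans by blast
  moreover have "lnorm (a n * h n (fls_X ^ i)) \<le> (SUP n. lnorm (a n))" for n i
    using mult_left_le[OF lnorm_entry_le_1[of n i] lnorm_nonneg[of "a n"]] A[of n]
    by (simp add: lnorm_mult)
  ultimately have "lnorm (f (fls_X ^ i)) \<le> (SUP n. lnorm (a n))" for i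
    using a unfolding expansion_eqs_def by (simp add: lnorm_sum_leI)
  thus "supnorm f \<le> (SUP n. lnorm (a n))" by (rule supnorm_LC_le[OF f])
next
  have "0 \<le> supnorm f" using lnorm_monomial_le_supnorm_LC[OF f, of 0] lnorm_nonneg order_trans by blast
  thus "(SUP n. lnorm (a n)) \<le> supnorm f"
    using lnorm_expansion_coeffs_le[OF a _ lnorm_monomial_le_supnorm_LC[OF f]] by (intro cSUP_least) auto
qed

theorem orthonormal_basis_LC: "orthonormal_basis LC h"
  unfolding orthonormal_basis_def null_seq_def
proof (intro conjI allI ballI)
  show "h n \<in> LC" for n by (rule in_LC)
  fix f :: "'a fls \<Rightarrow> 'a fls" assume f: "f \<in> LC"
  have null: "(\<lambda>n. lnorm (back_subst f n)) \<longlonglongrightarrow> 0"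
    by (rule expansion_coeffs_tendsto_0[OF expansion_eqs_back_subst LC_monomials_tendsto_0[OF f]])
  show "\<exists>!a. (\<lambda>n. lnorm (a n)) \<longlonglongrightarrow> 0 \<and> represents a h f"
  proof (rule ex1I[of _ "back_subst f"])
    show "(\<lambda>n. lnorm (back_subst f n)) \<longlonglongrightarrow> 0 \<and> represents (back_subst f) h f"
      using null expansion_eqs_imp_represents[OF f expansion_eqs_back_subst null] by blast
  qed (use expansion_eqs_unique expansion_eqs_back_subst represents_imp_expansion_eqs[OF f] in blast)
  show "(\<lambda>n. lnorm (a n)) \<longlonglongrightarrow> 0 \<and> represents a h f \<longrightarrow> supnorm f = (SUP n. lnorm (a n))" for a
    using supnorm_eq_SUP_expansion_coeffs[OF f] represents_imp_expansion_eqs[OF f] by blast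
qed

end

section \<open>Hasse derivatives\<close>

lemma hasse_nth:
  "fls_nth (hasse n x) k = (if k + int n < 0 then 0 else of_nat (nat (k + int n) choose n) * fls_nth x (k + int n))"
  unfolding hasse_def by (rule nth_Abs_fls_lower_bound[where N="- int n"]) auto

lemma Fq_linear_hasse: "Fq_linear (hasse n)"
  unfolding Fq_linear_def by (auto intro!: fls_eqI simp: hasse_nth algebra_simps)

lemma hasse_X_power:
  "hasse n (fls_X ^ i :: 'a::{field,finite} fls) = fls_const (of_nat (i choose n)) * fls_X ^ (i - n)"
  by (rule fls_eqI) (auto simp: hasse_nth binomial_eq_0)

lemma lnorm_hasse_le: "lnorm (hasse n (x :: 'a::{field,finite} fls)) \<le> real CARD('a) ^ n * lnorm x"
proof (cases "hasse n x = 0")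
  case False
  hence "x \<noteq> 0" using Fq_linear_diff[OF Fq_linear_hasse, of n x x] by auto
  have "fls_subdegree x - int n \<le> fls_subdegree (hasse n x)"
    using False by (intro fls_subdegree_geI) (auto simp: hasse_nth)
  hence "lnorm (hasse n x) \<le> real CARD('a) powr (- real_of_int (fls_subdegree x - int n))"
    using lnorm_le_powr_iff by blast
  also have "\<dots> = real CARD('a) ^ n * lnorm x"
    using \<open>x \<noteq> 0\<close> real_CARD_field_gt_1[where 'a='a]
    by (simp add: lnorm_def powr_add[symmetric] powr_realpow[symmetric])
  finally show ?thesis .
qed simp

interpretation hasse: triangular_LC_family "hasse :: nat \<Rightarrow> 'a::{field,finite} fls \<Rightarrow> 'a fls"
proof
  show "hasse n \<in> (LC :: ('a fls \<Rightarrow> 'a fls) set)" for n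
    using real_CARD_field_gt_1[where 'a='a]
    by (intro LC_if_Fq_linear_Lipschitz[OF Fq_linear_hasse _ lnorm_hasse_le]) simp
  show "i < n \<Longrightarrow> hasse n (fls_X ^ i :: 'a fls) = 0" for n i
    by (simp add: hasse_X_power binomial_eq_0)
  show "lnorm (hasse n (fls_X ^ n :: 'a fls)) = 1" for n
    by (simp add: hasse_X_power lnorm_def)
  show "lnorm (hasse n (fls_X ^ i :: 'a fls)) \<le> 1 / real CARD('a) ^ (i - n)" for n i
    by (simp add: hasse_X_power lnorm_mult lnorm_X_power lnorm_const)
qed

section \<open>Carlitz polynomials\<close>

(* The library's finite_field_power_card_eq_same is stated for the sort finite_field. *)
lemma finite_field_power_CARD: "(x::'a::{field,finite}) ^ CARD('a) = x"
proof (cases "x = 0")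
  case False
  let ?U = "UNIV - {0::'a}"
  have "x ^ card ?U * (\<Prod>y\<in>?U. y) = (\<Prod>y\<in>?U. x * y)"
    by (simp add: prod.distrib)
  also have "\<dots> = (\<Prod>y\<in>?U. y)"
    by (rule prod.reindex_bij_witness[of _ "\<lambda>y. y / x" "\<lambda>y. x * y"]) (use False in auto)
  finally have "x ^ card ?U = 1"
    by (metis DiffD2 insertI1 mult_cancel_right2 prod_zero_iff finite_Diff finite)
  moreover have "CARD('a) = Suc (card ?U)"
    by (simp add: card_Diff_singleton Suc_diff_1 finite_UNIV_card_ge_0)
  ultimately show ?thesis by (metis power_Suc mult.right_neutral)
qed (simp add: finite_UNIV_card_ge_0)

(* q is not known to be prime here, so instead of the freshman's dream for CHAR('a) we use that
   (X + 1)^q - X^q - 1 has degree < q and vanishes on all of F_q. *)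
lemma of_nat_CARD_choose_eq_0:
  assumes k: "0 < k" "k < CARD('a::{field,finite})"
  shows "(of_nat (CARD('a) choose k) :: 'a) = 0"
proof -
  let ?q = "CARD('a)"
  define P :: "'a poly" where "P = (\<Sum>j\<in>{1..<?q}. monom (of_nat (?q choose j)) j)"
  have "poly P x = 0" for x
  proof -
    have "(x + 1) ^ ?q = (\<Sum>j\<le>?q. of_nat (?q choose j) * x ^ j * 1 ^ (?q - j))"
      by (rule binomial_ring)
    also have "{..?q} = insert 0 (insert ?q {1..<?q})" by auto
    also have "(\<Sum>j\<in>insert 0 (insert ?q {1..<?q}). of_nat (?q choose j) * x ^ j * 1 ^ (?q - j))
        = 1 + (x ^ ?q + poly P x)"
      using CARD_field_ge_2[where 'a='a] by (simp add: P_def poly_sum poly_monom)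
    finally show ?thesis by (simp add: finite_field_power_CARD)
  qed
  moreover have "degree P < ?q"
  proof -
    have "degree P \<le> ?q - 1" unfolding P_def
      by (intro degree_sum_le) (auto intro: order.trans[OF degree_monom_le])
    thus ?thesis using CARD_field_ge_2[where 'a='a] by linarith
  qed
  ultimately have "P = 0" by (intro poly_eqI_degree[of UNIV]) auto
  hence "coeff P k = 0" by simp
  thus ?thesis unfolding P_def coeff_sum using k by (simp add: coeff_monom)
qed

lemma fls_power_CARD_add:
  "((x :: 'a::{field,finite} fls) + y) ^ CARD('a) = x ^ CARD('a) + y ^ CARD('a)"
proof -
  let ?q = "CARD('a)"
  have "(x + y) ^ ?q = (\<Sum>j\<le>?q. of_nat (?q choose j) * x ^ j * y ^ (?q - j))"
    by (rule binomial_ring)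
  also have "{..?q} = insert 0 (insert ?q {1..<?q})" by auto
  also have "(\<Sum>j\<in>insert 0 (insert ?q {1..<?q}). of_nat (?q choose j) * x ^ j * y ^ (?q - j))
      = y ^ ?q + (x ^ ?q + (\<Sum>j\<in>{1..<?q}. of_nat (?q choose j) * x ^ j * y ^ (?q - j)))"
    using CARD_field_ge_2[where 'a='a] by simp
  also have "(\<Sum>j\<in>{1..<?q}. of_nat (?q choose j) * x ^ j * y ^ (?q - j)) = 0"
    by (intro sum.neutral) (auto simp: fls_of_nat of_nat_CARD_choose_eq_0)
  finally show ?thesis by simp
qed

lemma Fq_linear_power_CARD_diff_mult:
  fixes g :: "'a::{field,finite} fls \<Rightarrow> 'a fls"
  assumes g: "Fq_linear g"
  shows "Fq_linear (\<lambda>x. g x ^ CARD('a) - K * g x)"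
  unfolding Fq_linear_def
proof (intro conjI allI)
  fix x y :: "'a fls"
  show "g (x + y) ^ CARD('a) - K * g (x + y) = g x ^ CARD('a) - K * g x + (g y ^ CARD('a) - K * g y)"
    using g by (simp add: Fq_linear_def fls_power_CARD_add algebra_simps)
next
  fix c :: 'a and x :: "'a fls"
  have "fls_const c ^ CARD('a) = fls_const c"
    by (simp add: finite_field_power_CARD flip: fls_const_power)
  thus "g (fls_const c * x) ^ CARD('a) - K * g (fls_const c * x)
      = fls_const c * (g x ^ CARD('a) - K * g x)"
    using g by (simp add: Fq_linear_def power_mult_distrib algebra_simps)
qed

lemma prod_UNIV_minus_fls_const:
  "(\<Prod>c\<in>(UNIV::'a::{field,finite} set). Y - fls_const c) = Y ^ CARD('a) - Y"
proof -
  let ?q = "CARD('a)"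
  define P :: "'a fls poly" where "P = (\<Prod>c\<in>(UNIV::'a set). [:- fls_const c, 1:])"
  define Q :: "'a fls poly" where "Q = monom 1 ?q - [:0, 1:]"
  have q2: "?q \<ge> 2" by (rule CARD_field_ge_2)
  have degP: "degree P = ?q" unfolding P_def by (subst degree_prod_eq_sum_degree) auto
  have "P = Q"
  proof (rule poly_eqI_degree_lead_coeff[of P ?q Q "range fls_const"])
    show "coeff P ?q = coeff Q ?q"
      using lead_coeff_prod[of "\<lambda>c. [:- fls_const c, 1:]" "UNIV :: 'a set"] degP q2
      by (simp add: P_def Q_def coeff_monom coeff_pCons split: nat.split)
    show "?q \<le> card (range (fls_const :: 'a \<Rightarrow> 'a fls))"
      by (subst card_image) (auto simp: inj_on_def fls_const_nth fls_eq_iff)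
    show "degree P \<le> ?q" using degP by simp
    show "degree Q \<le> ?q" unfolding Q_def using q2 by (intro degree_diff_le) (auto simp: degree_monom_le)
    fix z assume "z \<in> range (fls_const :: 'a \<Rightarrow> 'a fls)"
    then obtain d where d: "z = fls_const d" by blast
    have "poly P z = 0" by (auto simp: P_def poly_prod d)
    also have "0 = poly Q z"
      by (simp add: Q_def poly_monom d finite_field_power_CARD flip: fls_const_power)
    finally show "poly P z = poly Q z" .
  qed
  hence "poly P Y = poly Q Y" by simp
  thus ?thesis by (simp add: P_def Q_def poly_prod poly_monom)
qed

lemma prod_UNIV_minus_fls_const_mult:
  "(\<Prod>c\<in>(UNIV::'a::{field,finite} set). A - fls_const c * B) = A ^ CARD('a) - B ^ (CARD('a) - 1) * A"
proof (cases "B = 0")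
  case False
  let ?q = "CARD('a)"
  have q: "B ^ ?q = B ^ (?q - 1) * B"
    using CARD_field_ge_2[where 'a='a] by (simp flip: power_Suc2)
  have "(\<Prod>c\<in>(UNIV::'a set). A - fls_const c * B) = (\<Prod>c\<in>(UNIV::'a set). B * (A / B - fls_const c))"
    using False by (intro prod.cong) (auto simp: field_simps)
  also have "\<dots> = B ^ ?q * ((A / B) ^ ?q - A / B)"
    by (simp add: prod.distrib prod_UNIV_minus_fls_const)
  also have "\<dots> = B ^ ?q * (A / B) ^ ?q - B ^ ?q * (A / B)"
    by (simp add: right_diff_distrib)
  also have "B ^ ?q * (A / B) ^ ?q = A ^ ?q"
    using False by (simp add: power_divide)
  also have "B ^ ?q * (A / B) = B ^ (?q - 1) * A"
    using False unfolding q by simp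
  finally show ?thesis .
qed (use CARD_field_ge_2[where 'a='a] in simp)

lemma finite_degree_less: "finite {m::'a::{zero,finite} poly. degree m < n}"
proof -
  have "{m. degree m < n} \<subseteq> Poly ` {xs::'a list. set xs \<subseteq> UNIV \<and> length xs \<le> n}"
  proof
    fix m :: "'a poly" assume "m \<in> {m. degree m < n}"
    hence "length (coeffs m) \<le> n" by (cases "m = 0") (auto simp: length_coeffs)
    thus "m \<in> Poly ` {xs. set xs \<subseteq> UNIV \<and> length xs \<le> n}"
      by (intro image_eqI[of _ _ "coeffs m"]) auto
  qed
  thus ?thesis by (rule finite_subset) (intro finite_imageI finite_lists_length_le finite)
qed

lemma degree_less_1_eq: "{m::'a::zero poly. degree m < 1} = range (\<lambda>c. [:c:])"
  by (auto intro: degree_0_id[symmetric])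

lemma bij_betw_degree_less_Suc:
  assumes "1 \<le> n"
  shows "bij_betw (\<lambda>(m, c). m + monom c n) ({m::'a::ab_group_add poly. degree m < n} \<times> UNIV)
           {m. degree m < Suc n}"
proof (rule bij_betw_imageI)
  show "inj_on (\<lambda>(m, c). m + monom c n) ({m::'a poly. degree m < n} \<times> UNIV)"
  proof (rule inj_onI, clarsimp)
    fix m c m' c' assume deg: "degree (m::'a poly) < n" "degree m' < n"
      and eq: "m + monom c n = m' + monom c' n"
    have "c = c'" using arg_cong[OF eq, of "\<lambda>p. coeff p n"] deg by (simp add: coeff_eq_0)
    thus "m = m' \<and> c = c'" using eq by simp
  qed
  show "(\<lambda>(m, c). m + monom c n) ` ({m::'a poly. degree m < n} \<times> UNIV) = {m. degree m < Suc n}"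
  proof (intro set_eqI iffI)
    fix p :: "'a poly" assume p: "p \<in> {m. degree m < Suc n}"
    have "degree (p - monom (coeff p n) n) < n"
      using assms p by (intro degree_lessI) (auto simp: coeff_eq_0 le_less)
    thus "p \<in> (\<lambda>(m, c). m + monom c n) ` ({m. degree m < n} \<times> UNIV)"
      by (intro image_eqI[of _ _ "(p - monom (coeff p n) n, coeff p n)"]) auto
  next
    fix p :: "'a poly" assume "p \<in> (\<lambda>(m, c). m + monom c n) ` ({m. degree m < n} \<times> UNIV)"
    then obtain m c where "p = m + monom c n" "degree m < n" by auto
    thus "p \<in> {m. degree m < Suc n}"
      using degree_add_le[of m n "monom c n"] degree_monom_le[of c n] by auto
  qed
qed

lemma poly_to_fls_add: "poly_to_fls (p + q) = poly_to_fls p + poly_to_fls (q :: 'a::{field,finite} poly)"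
  by (simp add: poly_to_fls_def fps_of_poly_add)

lemma poly_to_fls_monom: "poly_to_fls (monom c n) = fls_const (c::'a::{field,finite}) * fls_X ^ n"
  by (simp add: poly_to_fls_def fps_of_poly_monom fls_times_fps_to_fls fps_to_fls_power)

lemma poly_to_fls_const: "poly_to_fls [:c:] = fls_const (c::'a::{field,finite})"
  by (simp add: poly_to_fls_def fps_of_poly_const)

lemma poly_to_fls_in_Oset: "poly_to_fls (p :: 'a::{field,finite} poly) \<in> Oset"
  by (simp add: poly_to_fls_def Oset_def fls_subdegree_fls_to_fps_gt0)

(* Since degree 0 = 0, car_e 0 is the empty product 1 and not x; hence 1 <= n below. *)
lemma car_e_1: "car_e 1 x = x ^ CARD('a) - (x :: 'a::{field,finite} fls)"
proof -
  have "car_e 1 x = (\<Prod>c\<in>(UNIV::'a set). x - poly_to_fls [:c:])"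
    unfolding car_e_def degree_less_1_eq by (subst prod.reindex) (auto simp: inj_on_def)
  thus ?thesis by (simp add: poly_to_fls_const prod_UNIV_minus_fls_const)
qed

lemma car_e_Suc_prod:
  assumes "1 \<le> n"
  shows "car_e (Suc n) x = (\<Prod>c\<in>(UNIV::'a::{field,finite} set). car_e n (x - fls_const c * fls_X ^ n))"
proof -
  have "car_e (Suc n) x = (\<Prod>(m, c)\<in>{m::'a poly. degree m < n} \<times> UNIV. x - poly_to_fls (m + monom c n))"
    unfolding car_e_def prod.reindex_bij_betw[OF bij_betw_degree_less_Suc[OF assms], symmetric]
    by (simp add: case_prod_beta)
  also have "\<dots> = (\<Prod>m\<in>{m::'a poly. degree m < n}. \<Prod>c\<in>UNIV. (x - fls_const c * fls_X ^ n) - poly_to_fls m)"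
    by (subst prod.cartesian_product) (simp add: poly_to_fls_add poly_to_fls_monom algebra_simps)
  also have "\<dots> = (\<Prod>c\<in>(UNIV::'a set). car_e n (x - fls_const c * fls_X ^ n))"
    unfolding car_e_def by (rule prod.swap)
  finally show ?thesis .
qed

lemma car_e_Suc:
  fixes x :: "'a::{field,finite} fls"
  assumes "1 \<le> n" and lin: "Fq_linear (car_e n :: 'a fls \<Rightarrow> 'a fls)"
  shows "car_e (Suc n) x = car_e n x ^ CARD('a) - car_e n (fls_X ^ n) ^ (CARD('a) - 1) * car_e n x"
proof -
  have "car_e n (x - fls_const c * fls_X ^ n) = car_e n x - fls_const c * car_e n (fls_X ^ n)" for c
    using Fq_linear_diff[OF lin, of x "fls_const c * fls_X ^ n"] lin unfolding Fq_linear_def by simp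
  thus ?thesis by (simp add: car_e_Suc_prod[OF assms(1)] prod_UNIV_minus_fls_const_mult)
qed

lemma Fq_linear_car_e: "1 \<le> n \<Longrightarrow> Fq_linear (car_e n :: 'a::{field,finite} fls \<Rightarrow> 'a fls)"
proof (induction n rule: nat_induct_at_least)
  case base
  have "car_e 1 = (\<lambda>x::'a fls. x ^ CARD('a) - 1 * x)" by (rule ext) (subst car_e_1, simp)
  show ?case unfolding \<open>car_e 1 = _\<close>
    by (rule Fq_linear_power_CARD_diff_mult) (simp add: Fq_linear_def)
next
  case (Suc n)
  thus ?case
    using Fq_linear_power_CARD_diff_mult[OF Suc.IH] by (simp add: car_e_Suc[OF Suc.hyps Suc.IH])
qed

lemma fls_subdegree_diff_of_less:
  fixes f g :: "'a::ab_group_add fls"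
  assumes "g \<noteq> 0" "f = 0 \<or> fls_subdegree g < fls_subdegree f"
  shows "f - g \<noteq> 0 \<and> fls_subdegree (f - g) = fls_subdegree g"
proof -
  have "fls_nth (f - g) (fls_subdegree g) \<noteq> 0"
    using assms by (auto simp: fls_eq0_below_subdegree)
  thus ?thesis using assms fls_subdegree_diff_eq2[of g f] by auto
qed

lemma fls_subdegree_power_diff_mult:
  fixes A B :: "'a::idom fls"
  assumes AB: "A \<noteq> 0" "B \<noteq> 0" and d: "fls_subdegree A = fls_subdegree B + int d" "0 < d" and k: "2 \<le> k"
  shows "A ^ k - B ^ (k - 1) * A \<noteq> 0 \<and> fls_subdegree (A ^ k - B ^ (k - 1) * A) = int k * fls_subdegree B + int d"
proof -
  have "fls_subdegree (B ^ (k - 1) * A) = int (k - 1) * fls_subdegree B + fls_subdegree B + int d"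
    using AB d by (simp add: fls_subdegree_pow)
  also have "\<dots> = int k * fls_subdegree B + int d"
    using k by (simp add: of_nat_diff algebra_simps)
  finally have low: "fls_subdegree (B ^ (k - 1) * A) = int k * fls_subdegree B + int d" .
  have "int d < int k * int d" using d k by simp
  hence "fls_subdegree (B ^ (k - 1) * A) < fls_subdegree (A ^ k)"
    unfolding low using AB d by (simp add: fls_subdegree_pow algebra_simps)
  thus ?thesis using fls_subdegree_diff_of_less[of "B ^ (k - 1) * A" "A ^ k"] AB low by simp
qed

lemma brk_subdegree: "1 \<le> j \<Longrightarrow> brk j \<noteq> (0::'a::{field,finite} fls) \<and> fls_subdegree (brk j :: 'a fls) = 1"
  using fls_subdegree_diff_of_less[of "fls_X :: 'a fls" "fls_X ^ (CARD('a) ^ j)"]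
    one_less_power[of "CARD('a)" j] CARD_field_ge_2[where 'a='a]
  by (simp add: brk_def)

lemma carF_Suc: "carF (Suc n) = brk (Suc n) * (carF n :: 'a::{field,finite} fls) ^ CARD('a)"
proof -
  have "carF (Suc n) = brk (Suc n) * (\<Prod>i\<in>{1..n}. brk i ^ (CARD('a) ^ (Suc n - i)) :: 'a fls)"
    by (simp add: carF_def atLeastAtMostSuc_conv)
  also have "(\<Prod>i\<in>{1..n}. brk i ^ (CARD('a) ^ (Suc n - i)) :: 'a fls)
      = (\<Prod>i\<in>{1..n}. (brk i ^ (CARD('a) ^ (n - i))) ^ CARD('a))"
    by (intro prod.cong refl) (simp add: Suc_diff_le power_mult[symmetric] mult.commute)
  also have "\<dots> = carF n ^ CARD('a)"
    by (simp add: carF_def prod_power_distrib)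
  finally show ?thesis .
qed

lemma carF_nonzero: "carF n \<noteq> (0::'a::{field,finite} fls)"
  by (induction n) (simp_all add: carF_def carF_Suc brk_subdegree)

lemma subdegree_carF_Suc:
  "fls_subdegree (carF (Suc n) :: 'a::{field,finite} fls) = 1 + int CARD('a) * fls_subdegree (carF n :: 'a fls)"
proof -
  have "carF n ^ CARD('a) \<noteq> (0::'a fls)" using carF_nonzero by simp
  thus ?thesis
    using brk_subdegree[of "Suc n", where 'a='a] by (simp add: carF_Suc fls_subdegree_pow)
qed

lemma car_e_X_power:
  "1 \<le> n \<Longrightarrow> n \<le> i \<Longrightarrow> car_e n (fls_X ^ i) \<noteq> (0::'a::{field,finite} fls) \<and>
     fls_subdegree (car_e n (fls_X ^ i) :: 'a fls) = fls_subdegree (carF n :: 'a fls) + int i - int n"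
proof (induction n arbitrary: i rule: nat_induct_at_least)
  case base
  have "car_e 1 (fls_X ^ i :: 'a fls) = (fls_X ^ i) ^ CARD('a) - 1 ^ (CARD('a) - 1) * fls_X ^ i"
    by (subst car_e_1) simp
  moreover have "fls_subdegree (carF 1 :: 'a fls) = 1"
    using subdegree_carF_Suc[of 0, where 'a='a] by (simp add: carF_def)
  ultimately show ?case
    using base fls_subdegree_power_diff_mult[of "fls_X ^ i :: 'a fls" 1 i "CARD('a)"] CARD_field_ge_2[where 'a='a]
    by simp
next
  case (Suc n)
  let ?F = "fls_subdegree (carF n :: 'a fls)"
  have rec: "car_e (Suc n) (fls_X ^ i :: 'a fls)
      = car_e n (fls_X ^ i) ^ CARD('a) - car_e n (fls_X ^ n) ^ (CARD('a) - 1) * car_e n (fls_X ^ i)"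
    by (rule car_e_Suc[OF Suc.hyps Fq_linear_car_e[OF Suc.hyps]])
  have "car_e n (fls_X ^ i) \<noteq> (0::'a fls)" "fls_subdegree (car_e n (fls_X ^ i) :: 'a fls) = ?F + int (i - n)"
    "car_e n (fls_X ^ n) \<noteq> (0::'a fls)" "fls_subdegree (car_e n (fls_X ^ n) :: 'a fls) = ?F"
    using Suc.IH[of i] Suc.IH[of n] Suc.prems by auto
  thus ?case
    using fls_subdegree_power_diff_mult[of "car_e n (fls_X ^ i) :: 'a fls" "car_e n (fls_X ^ n)" "i - n" "CARD('a)"]
      CARD_field_ge_2[where 'a='a] Suc.prems
    by (simp add: rec subdegree_carF_Suc of_nat_diff)
qed

lemma lnorm_carlitzE_X_power:
  assumes "1 \<le> n" "n \<le> i"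
  shows "lnorm (carlitzE n (fls_X ^ i) :: 'a::{field,finite} fls) = 1 / real CARD('a) ^ (i - n)"
proof -
  let ?q = "real CARD('a)" and ?F = "real_of_int (fls_subdegree (carF n :: 'a fls))"
  have e: "car_e n (fls_X ^ i) \<noteq> (0::'a fls)"
    and v: "real_of_int (fls_subdegree (car_e n (fls_X ^ i) :: 'a fls)) = ?F + real (i - n)"
    using car_e_X_power[OF assms, where 'a='a] assms by (simp_all add: of_nat_diff)
  have "lnorm (carlitzE n (fls_X ^ i) :: 'a fls) = lnorm (car_e n (fls_X ^ i) :: 'a fls) / lnorm (carF n :: 'a fls)"
    using assms by (simp add: carlitzE_def lnorm_divide)
  also have "\<dots> = ?q powr (- (?F + real (i - n))) / ?q powr (- ?F)"
    using e carF_nonzero[of n, where 'a='a] unfolding lnorm_def v by simp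
  also have "?q powr (- (?F + real (i - n))) = ?q powr (- ?F) * ?q powr (- real (i - n))"
    by (simp only: minus_add_distrib powr_add)
  also have "?q powr (- ?F) * ?q powr (- real (i - n)) / ?q powr (- ?F) = 1 / ?q ^ (i - n)"
    using real_CARD_field_gt_1[where 'a='a] by (simp add: powr_minus powr_realpow divide_inverse)
  finally show ?thesis .
qed

lemma carlitzE_X_power_below:
  assumes "i < n"
  shows "carlitzE n (fls_X ^ i) = (0::'a::{field,finite} fls)"
proof -
  have "car_e n (fls_X ^ i) = (0::'a fls)" unfolding car_e_def
    using assms by (intro prod_zero[OF finite_degree_less] bexI[of _ "monom 1 i"])
      (auto simp: poly_to_fls_monom degree_monom_eq)
  thus ?thesis using assms by (simp add: carlitzE_def)
qed

lemma lnorm_car_e_le: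
  assumes "1 \<le> n" and x: "x \<in> Oset"
  shows "lnorm (car_e n (x :: 'a::{field,finite} fls)) \<le> lnorm x"
proof -
  let ?P = "{m::'a poly. degree m < n}"
  have "car_e n x = (x - poly_to_fls 0) * (\<Prod>m\<in>?P - {0}. x - poly_to_fls m)"
    unfolding car_e_def using assms finite_degree_less[of n, where 'a='a] by (subst prod.remove[of _ 0]) auto
  hence "lnorm (car_e n x) = lnorm x * (\<Prod>m\<in>?P - {0}. lnorm (x - poly_to_fls m))"
    by (simp add: lnorm_mult lnorm_prod poly_to_fls_def)
  also have "\<dots> \<le> lnorm x * 1"
    using Oset_diff[OF x poly_to_fls_in_Oset]
    by (intro mult_left_mono prod_le_1) (auto simp: Oset_iff_lnorm_le_1)
  finally show ?thesis by simp
qed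

lemma Fq_linear_carlitzE: "Fq_linear (carlitzE n :: 'a::{field,finite} fls \<Rightarrow> 'a fls)"
  using Fq_linear_car_e[of n, where 'a='a]
  by (cases "n = 0") (auto simp: Fq_linear_def carlitzE_def add_divide_distrib)

lemma carlitzE_in_LC: "carlitzE n \<in> (LC :: ('a::{field,finite} fls \<Rightarrow> 'a fls) set)"
proof (cases "n = 0")
  case True
  thus ?thesis by (intro LC_if_Fq_linear_Lipschitz[OF Fq_linear_carlitzE, of 1]) (simp_all add: carlitzE_def)
next
  case False
  have F: "lnorm (carF n :: 'a fls) > 0" by (rule lnorm_pos[OF carF_nonzero])
  show ?thesis
  proof (rule LC_if_Fq_linear_Lipschitz[OF Fq_linear_carlitzE, of "1 / lnorm (carF n :: 'a fls)"])
    fix x :: "'a fls" assume "x \<in> Oset"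
    hence "lnorm (car_e n x) / lnorm (carF n :: 'a fls) \<le> lnorm x / lnorm (carF n :: 'a fls)"
      using False F by (intro divide_right_mono lnorm_car_e_le) auto
    thus "lnorm (carlitzE n x) \<le> 1 / lnorm (carF n :: 'a fls) * lnorm x"
      using False by (simp add: carlitzE_def lnorm_divide)
  qed (use F in simp)
qed

interpretation carlitz: triangular_LC_family "carlitzE :: nat \<Rightarrow> 'a::{field,finite} fls \<Rightarrow> 'a fls"
proof
  show "carlitzE n \<in> (LC :: ('a fls \<Rightarrow> 'a fls) set)" for n by (rule carlitzE_in_LC)
  show "i < n \<Longrightarrow> carlitzE n (fls_X ^ i :: 'a fls) = 0" for n i by (rule carlitzE_X_power_below)
  show "lnorm (carlitzE n (fls_X ^ n :: 'a fls)) = 1" for n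
    using lnorm_carlitzE_X_power[of n n, where 'a='a] by (cases "n = 0") (simp_all add: carlitzE_def lnorm_X_power)
  show "lnorm (carlitzE n (fls_X ^ i :: 'a fls)) \<le> 1 / real CARD('a) ^ (i - n)" for n i
  proof (cases "n = 0")
    case False
    thus ?thesis
      using lnorm_carlitzE_X_power[of n i, where 'a='a] carlitzE_X_power_below[of i n, where 'a='a]
      by (cases "n \<le> i") simp_all
  qed (simp add: carlitzE_def lnorm_X_power)
qed

theorem theorem5:
  shows "orthonormal_basis (LC :: ('a::{field,finite} fls \<Rightarrow> 'a fls) set) carlitzE
     \<longleftrightarrow> orthonormal_basis (LC :: ('a fls \<Rightarrow> 'a fls) set) hasse"
  using carlitz.orthonormal_basis_LC hasse.orthonormal_basis_LC by blast

end
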